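(* For an $E$-linear code $C$ of length $2n$, $C^{\perp_{S_R}}=C^{\perp_S}$ if and only if $C$ is right symplectic nice.
   Context: $E=\langle \kappa,\tau \mid 2\kappa=2\tau=0,\ \kappa^2=\kappa,\ \tau^2=\tau,\ \kappa\tau=\kappa,\ \tau\kappa=\tau\rangle$ is the non-unital ring $\{0,\kappa,\tau,\zeta\}$ ($|E|=4$), $\zeta=\kappa+\tau$, with $e\kappa=e\tau=e$, $e\zeta=0$ for all $e\in E$. An $E$-linear code of length $2n$ is a left $E$-submodule $C\subseteq E^{2n}$. Symplectic inner product: for $x=(u|v),y=(u'|v')\in E^{2n}$, $\langle x,y\rangle_s=\sum_i u_iv'_i+\sum_i v_iu'_i$. $C^{\perp_{S_L}}=\{z\in E^{2n}:\langle z,w\rangle_s=0\ \forall w\in C\}$, $C^{\perp_{S_R}}=\{z\in E^{2n}:\langle w,z\rangle_s=0\ \forall w\in C\}$, $C^{\perp_S}=C^{\perp_{S_L}}\cap C^{\perp_{S_R}}$. $C$ is right symplectic nice if $|C|\,|C^{\perp_{S_R}}|=|E|^{2n}$. *)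

theory Defs
  imports Main
begin

text \<open>The non-unital ring E = {0, kappa, tau, zeta}, zeta = kappa + tau.
  Additively E is (Z/2)^2 with basis kappa, tau; multiplication:
  e * kappa = e * tau = e, e * zeta = 0, e * 0 = 0.\<close>

datatype E = E0 | Kappa | Tau | Zeta

instantiation E :: ring
begin

definition zero_E :: E where "zero_E = E0"

fun plus_E :: "E \<Rightarrow> E \<Rightarrow> E" where
  "plus_E E0 y = y"
| "plus_E x E0 = x"
| "plus_E Kappa Kappa = E0"
| "plus_E Tau Tau = E0"
| "plus_E Zeta Zeta = E0"
| "plus_E Kappa Tau = Zeta"
| "plus_E Tau Kappa = Zeta"
| "plus_E Kappa Zeta = Tau"
| "plus_E Zeta Kappa = Tau"
| "plus_E Tau Zeta = Kappa"
| "plus_E Zeta Tau = Kappa"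

definition uminus_E :: "E \<Rightarrow> E" where "uminus_E x = x"

definition minus_E :: "E \<Rightarrow> E \<Rightarrow> E" where "minus_E x y = x + y"

definition times_E :: "E \<Rightarrow> E \<Rightarrow> E" where
  "times_E x y = (if y = Kappa \<or> y = Tau then x else E0)"

instance
proof
  fix a b c :: E
  show "a + b + c = a + (b + c)" by (cases a; cases b; cases c) auto
  show "a + b = b + a" by (cases a; cases b) auto
  show "0 + a = a" by (simp add: zero_E_def)
  show "- a + a = 0" by (cases a) (auto simp: uminus_E_def zero_E_def)
  show "a - b = a + - b" by (simp add: minus_E_def uminus_E_def)
  show "a * b * c = a * (b * c)" by (cases a; cases b; cases c) (auto simp: times_E_def)
  show "(a + b) * c = a * c + b * c" by (cases a; cases b; cases c) (auto simp: times_E_def)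
  show "a * (b + c) = a * b + a * c" by (cases a; cases b; cases c) (auto simp: times_E_def)
qed

end

text \<open>Vectors of E^{2n}: functions nat => E vanishing outside {0..<2n};
  a vector x is written (u|v) with u_i = x i and v_i = x (n+i) for i < n.\<close>

definition Espace :: "nat \<Rightarrow> (nat \<Rightarrow> E) set" where
  "Espace n = {x. \<forall>i\<ge>2*n. x i = 0}"

definition symp :: "nat \<Rightarrow> (nat \<Rightarrow> E) \<Rightarrow> (nat \<Rightarrow> E) \<Rightarrow> E" where
  "symp n x y = (\<Sum>i<n. x i * y (n+i)) + (\<Sum>i<n. x (n+i) * y i)"

definition E_linear_code :: "nat \<Rightarrow> (nat \<Rightarrow> E) set \<Rightarrow> bool" where
  "E_linear_code n C \<longleftrightarrow> C \<subseteq> Espace n \<and> (\<lambda>_. 0) \<in> C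
     \<and> (\<forall>x\<in>C. \<forall>y\<in>C. (\<lambda>i. x i + y i) \<in> C)
     \<and> (\<forall>e::E. \<forall>x\<in>C. (\<lambda>i. e * x i) \<in> C)"

definition symp_perp_L :: "nat \<Rightarrow> (nat \<Rightarrow> E) set \<Rightarrow> (nat \<Rightarrow> E) set" where
  "symp_perp_L n C = {z \<in> Espace n. \<forall>w\<in>C. symp n z w = 0}"

definition symp_perp_R :: "nat \<Rightarrow> (nat \<Rightarrow> E) set \<Rightarrow> (nat \<Rightarrow> E) set" where
  "symp_perp_R n C = {z \<in> Espace n. \<forall>w\<in>C. symp n w z = 0}"

definition symp_perp :: "nat \<Rightarrow> (nat \<Rightarrow> E) set \<Rightarrow> (nat \<Rightarrow> E) set" where
  "symp_perp n C = symp_perp_L n C \<inter> symp_perp_R n C"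

definition right_symplectic_nice :: "nat \<Rightarrow> (nat \<Rightarrow> E) set \<Rightarrow> bool" where
  "right_symplectic_nice n C \<longleftrightarrow> card C * card (symp_perp_R n C) = card (UNIV :: E set) ^ (2*n)"

end

theory Submission
  imports Defs "HOL-Library.Function_Algebras" "HOL-Library.FuncSet" "HOL.Modules"
begin

text \<open>Right multiplication in E only sees whether the right factor lies in {\<kappa>, \<tau>}, so
  y z = y (\<kappa> z), and the symplectic form \<langle>w, z\<rangle> depends on z only through \<kappa>z, a vector of the
  F2-space K = {0, \<kappa>}^2n. Viewing E as F2 \<kappa> + F2 \<tau>, a word z is right-orthogonal to C iff
  \<kappa>z is orthogonal to the set A of \<kappa>-coordinate vectors of C: closure of C under
  w \<mapsto> w + \<kappa>w takes care of the \<tau>-coordinates. The F2-duality |A| |A-perp| = |K| together with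
  |C| = |A| |\<kappa>C| then gives |C| |C-perp-right| = |\<kappa>C| |E|^2n, so C is right symplectic nice
  iff \<kappa>C = 0. The same condition characterises equality of the right and the two-sided
  symplectic duals: if \<kappa>C = 0, the entries of C lie in {0, \<zeta>}, which annihilate everything
  from the right; if some w_i lies in {\<kappa>, \<tau>}, the word with \<zeta> at the position paired with i
  is right- but not left-orthogonal to w.\<close>

definition additive_subgroup :: "'a::ab_group_add set \<Rightarrow> bool" where
  "additive_subgroup G \<longleftrightarrow> 0 \<in> G \<and> (\<forall>x\<in>G. \<forall>y\<in>G. x - y \<in> G)"

lemma additive_subgroup_zero: "additive_subgroup G \<Longrightarrow> 0 \<in> G"
  by (simp add: additive_subgroup_def)

lemma additive_subgroup_diff: "additive_subgroup G \<Longrightarrow> x \<in> G \<Longrightarrow> y \<in> G \<Longrightarrow> x - y \<in> G"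
  by (simp add: additive_subgroup_def)

lemma additive_subgroup_add:
  assumes "additive_subgroup G" "x \<in> G" "y \<in> G"
  shows "x + y \<in> G"
proof -
  have "- y \<in> G" using additive_subgroup_diff[OF assms(1) additive_subgroup_zero[OF assms(1)] assms(3)] by simp
  then show ?thesis using additive_subgroup_diff[OF assms(1,2), of "- y"] by simp
qed

lemma additive_subgroup_image:
  assumes "additive f" "additive_subgroup G"
  shows "additive_subgroup (f ` G)"
  unfolding additive_subgroup_def
proof (intro conjI ballI)
  show "0 \<in> f ` G"
    using additive.zero[OF assms(1)] additive_subgroup_zero[OF assms(2)] by force
  show "a - b \<in> f ` G" if ab: "a \<in> f ` G" "b \<in> f ` G" for a b
  proof -
    obtain x y where "x \<in> G" "y \<in> G" "a = f x" "b = f y" using ab by blast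
    then have "a - b = f (x - y)" "x - y \<in> G"
      using additive.diff[OF assms(1)] additive_subgroup_diff[OF assms(2)] by auto
    then show ?thesis by blast
  qed
qed

lemma card_preimage_additive:
  assumes f: "additive f" and G: "finite G" "additive_subgroup G"
  shows "card {x\<in>G. f x \<in> T} = card (T \<inter> f ` G) * card {x\<in>G. f x = 0}"
proof -
  have fibre: "card {x\<in>G. f x = y} = card {x\<in>G. f x = 0}" if "y \<in> f ` G" for y
  proof -
    obtain u where u: "u \<in> G" "f u = y" using \<open>y \<in> f ` G\<close> by blast
    have "bij_betw (\<lambda>x. x - u) {x\<in>G. f x = y} {x\<in>G. f x = 0}"
      by (rule bij_betw_byWitness[where f' = "\<lambda>x. x + u"])
        (use u G in \<open>auto simp: additive.diff[OF f] additive.add[OF f]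
          additive_subgroup_diff additive_subgroup_add\<close>)
    then show ?thesis by (rule bij_betw_same_card)
  qed
  have "{x\<in>G. f x \<in> T} = (\<Union>y\<in>T \<inter> f ` G. {x\<in>G. f x = y})" by auto
  then have "card {x\<in>G. f x \<in> T} = (\<Sum>y\<in>T \<inter> f ` G. card {x\<in>G. f x = y})"
    using G by (auto intro: card_UN_disjoint)
  also have "\<dots> = card (T \<inter> f ` G) * card {x\<in>G. f x = 0}"
    by (simp add: fibre)
  finally show ?thesis .
qed

lemma card_eq_two_mult_card_kernel:
  assumes f: "additive f" and G: "finite G" "additive_subgroup G"
    and two_valued: "f ` G \<subseteq> {0, c}" and "u \<in> G" "f u \<noteq> 0"
  shows "card G = 2 * card {x\<in>G. f x = 0}"
proof -
  have "f u = c" using two_valued \<open>u \<in> G\<close> \<open>f u \<noteq> 0\<close> by auto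
  moreover have "f 0 = 0" "0 \<in> G"
    using additive.zero[OF f] additive_subgroup_zero[OF G(2)] by auto
  ultimately have "f ` G = {0, c}" using two_valued \<open>u \<in> G\<close> by (auto intro: rev_image_eqI)
  moreover have "c \<noteq> 0" using \<open>f u = c\<close> \<open>f u \<noteq> 0\<close> by simp
  ultimately show ?thesis
    using card_preimage_additive[OF f G, of UNIV] by simp
qed

text \<open>Double counting the zeros of b on A \<times> K: a row or column on which b does not vanish
  identically is zero on exactly half of it.\<close>

lemma card_mult_card_annihilator:
  fixes b :: "'a::ab_group_add \<Rightarrow> 'b::ab_group_add \<Rightarrow> 'c::ab_group_add"
  assumes A: "finite A" "additive_subgroup A" and K: "finite K" "additive_subgroup K"
    and additive_left: "\<And>k. additive (\<lambda>a. b a k)" and additive_right: "\<And>a. additive (b a)"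
    and two_valued: "\<And>a k. a \<in> A \<Longrightarrow> k \<in> K \<Longrightarrow> b a k \<in> {0, c}"
    and nondegenerate: "\<And>a. a \<in> A \<Longrightarrow> a \<noteq> 0 \<Longrightarrow> \<exists>k\<in>K. b a k \<noteq> 0"
  shows "card A * card {k\<in>K. \<forall>a\<in>A. b a k = 0} = card K"
proof -
  define P where "P = {k\<in>K. \<forall>a\<in>A. b a k = 0}"
  have row: "2 * card {a\<in>A. b a k = 0} = card A + (if k \<in> P then card A else 0)"
    if "k \<in> K" for k
  proof (cases "k \<in> P")
    case True
    then have "{a\<in>A. b a k = 0} = A" by (auto simp: P_def)
    then show ?thesis using True by simp
  next
    case False
    then obtain u where "u \<in> A" "b u k \<noteq> 0" using \<open>k \<in> K\<close> by (auto simp: P_def)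
    moreover have "(\<lambda>a. b a k) ` A \<subseteq> {0, c}" using two_valued \<open>k \<in> K\<close> by blast
    ultimately show ?thesis
      using False card_eq_two_mult_card_kernel[OF additive_left A] by simp
  qed
  have column: "2 * card {k\<in>K. b a k = 0} = card K + (if a = 0 then card K else 0)"
    if "a \<in> A" for a
  proof (cases "a = 0")
    case True
    then have "{k\<in>K. b a k = 0} = K" using additive.zero[OF additive_left] by auto
    then show ?thesis using True by simp
  next
    case False
    then obtain k where "k \<in> K" "b a k \<noteq> 0" using nondegenerate \<open>a \<in> A\<close> by blast
    moreover have "b a ` K \<subseteq> {0, c}" using two_valued \<open>a \<in> A\<close> by blast
    ultimately show ?thesis
      using False card_eq_two_mult_card_kernel[OF additive_right K] by simp
  qed
  have "{k\<in>K. k \<in> P} = P" "{a\<in>A. a = 0} = {0}"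
    using additive_subgroup_zero[OF A(2)] by (auto simp: P_def)
  then have "card A * (card K + card P) = 2 * (\<Sum>k\<in>K. card {a\<in>A. b a k = 0})"
    using K(1) by (simp add: sum_distrib_left row sum.distrib algebra_simps flip: sum.inter_filter)
  also have "\<dots> = 2 * (\<Sum>a\<in>A. card {k\<in>K. b a k = 0})"
    using sum.swap_restrict[OF A(1) K(1), of "\<lambda>_ _. 1::nat" "\<lambda>a k. b a k = 0"] by simp
  also have "\<dots> = card K * (card A + 1)"
    using A(1) \<open>{a\<in>A. a = 0} = {0}\<close> additive_subgroup_zero[OF A(2)]
    by (simp add: sum_distrib_left column sum.distrib algebra_simps flip: sum.inter_filter)
  finally show ?thesis by (simp add: P_def algebra_simps)
qed

lemma card_functions_vanishing_outside:
  fixes c :: 'b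
  assumes "finite A"
  shows "card {f. \<forall>x. x \<notin> A \<longrightarrow> f x = c} = card (UNIV :: 'b set) ^ card A"
proof -
  have "bij_betw (\<lambda>f. restrict f A) {f. \<forall>x. x \<notin> A \<longrightarrow> f x = c} (A \<rightarrow>\<^sub>E (UNIV :: 'b set))"
  proof (rule bij_betw_byWitness[where f' = "\<lambda>g x. if x \<in> A then g x else c"])
    show "\<forall>g\<in>A \<rightarrow>\<^sub>E UNIV. restrict (\<lambda>x. if x \<in> A then g x else c) A = g"
    proof
      fix g :: "'a \<Rightarrow> 'b" assume "g \<in> A \<rightarrow>\<^sub>E UNIV"
      have "restrict (\<lambda>x. if x \<in> A then g x else c) A = restrict g A" by (rule restrict_ext) simp
      also have "\<dots> = g" using \<open>g \<in> A \<rightarrow>\<^sub>E UNIV\<close> by (rule PiE_restrict)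
      finally show "restrict (\<lambda>x. if x \<in> A then g x else c) A = g" .
    qed
    show "\<forall>f\<in>{f. \<forall>x. x \<notin> A \<longrightarrow> f x = c}. (\<lambda>x. if x \<in> A then restrict f A x else c) = f"
      by (simp add: fun_eq_iff)
    show "(\<lambda>f. restrict f A) ` {f. \<forall>x. x \<notin> A \<longrightarrow> f x = c} \<subseteq> A \<rightarrow>\<^sub>E UNIV"
      by (simp add: image_subset_iff)
    show "(\<lambda>g x. if x \<in> A then g x else c) ` (A \<rightarrow>\<^sub>E UNIV) \<subseteq> {f. \<forall>x. x \<notin> A \<longrightarrow> f x = c}"
      by auto
  qed
  then show ?thesis
    unfolding bij_betw_same_card[OF \<open>bij_betw _ _ _\<close>] card_funcsetE[OF assms] by simp
qed

lemma UNIV_E: "(UNIV :: E set) = {0, Kappa, Tau, Zeta}"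
  by (auto simp: zero_E_def intro: E.exhaust)

lemma E_times: "x * y = (if y = Kappa \<or> y = Tau then x else (0::E))"
  by (simp add: times_E_def zero_E_def)

lemma E_mult_eq_0_iff: "x * y = 0 \<longleftrightarrow> x = 0 \<or> (y \<noteq> Kappa \<and> y \<noteq> (Tau::E))"
  by (simp add: E_times)

lemma E_add_self [simp]: "x + x = (0::E)"
  by (cases x) (simp_all add: zero_E_def)

lemma E_diff_eq_add: "x - y = x + (y::E)"
  by (simp add: minus_E_def)

lemma E_nonzero [simp]: "Kappa \<noteq> 0" "Tau \<noteq> 0" "Zeta \<noteq> 0"
  by (simp_all add: zero_E_def)

lemma card_Espace: "card (Espace n) = card (UNIV :: E set) ^ (2 * n)"
  using card_functions_vanishing_outside[of "{..<2 * n}" 0] by (simp add: Espace_def not_less)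

lemma finite_Espace: "finite (Espace n)"
  using card_Espace[of n] by (intro card_ge_0_finite) (simp add: UNIV_E)

definition vscale :: "E \<Rightarrow> (nat \<Rightarrow> E) \<Rightarrow> nat \<Rightarrow> E" where
  "vscale e w = (\<lambda>i. e * w i)"

lemma additive_vscale: "additive (vscale e)"
  by standard (simp add: vscale_def fun_eq_iff distrib_left)

lemma vscale_vscale: "vscale a (vscale b w) = vscale (a * b) w"
  by (simp add: vscale_def mult.assoc)

lemma E_linear_codeD:
  assumes "E_linear_code n C"
  shows "C \<subseteq> Espace n" "finite C" "additive_subgroup C" "w \<in> C \<Longrightarrow> vscale e w \<in> C"
proof -
  show "C \<subseteq> Espace n" using assms by (simp add: E_linear_code_def)
  then show "finite C" using finite_Espace finite_subset by blast
  have "(\<lambda>i. x i + y i) \<in> C" if "x \<in> C" "y \<in> C" for x y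
    using assms that unfolding E_linear_code_def by blast
  moreover have "x - y = (\<lambda>i. x i + y i)" for x y :: "nat \<Rightarrow> E"
    by (simp add: fun_eq_iff E_diff_eq_add)
  moreover have "0 \<in> C"
    using assms unfolding E_linear_code_def zero_fun_def by blast
  ultimately show "additive_subgroup C"
    unfolding additive_subgroup_def by simp
  show "w \<in> C \<Longrightarrow> vscale e w \<in> C"
    using assms unfolding E_linear_code_def vscale_def by blast
qed

lemma additive_subgroup_Espace: "additive_subgroup (Espace n)"
  by (simp add: additive_subgroup_def Espace_def)

lemma additive_symp_left: "additive (\<lambda>w. symp n w z)"
  by standard (simp add: symp_def distrib_right sum.distrib add_ac)

lemma additive_symp_right: "additive (symp n w)"
  by standard (simp add: symp_def distrib_left sum.distrib add_ac)

lemma symp_vscale_left: "symp n (vscale e w) z = e * symp n w z"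
  by (simp add: symp_def vscale_def distrib_left sum_distrib_left mult.assoc)

lemma symp_vscale_Kappa_right: "symp n w (vscale Kappa z) = symp n w z"
proof -
  have "x * (Kappa * y) = x * y" for x y :: E
    by (cases y) (simp_all add: E_times zero_E_def)
  then show ?thesis by (simp add: symp_def vscale_def)
qed

lemma symp_zero_right [simp]: "symp n w 0 = 0"
  by (simp add: symp_def)

definition partner :: "nat \<Rightarrow> nat \<Rightarrow> nat" where
  "partner n i = (if i < n then n + i else i - n)"

lemma partner_less: "i < 2 * n \<Longrightarrow> partner n i < 2 * n"
  unfolding partner_def by auto

lemma mult_if_zero:
  "x * (if P then y else 0) = (if P then x * y else (0::E))"
  "(if P then y else 0) * x = (if P then y * x else (0::E))"
  by simp_all

lemma symp_unit_right:
  assumes "i < 2 * n"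
  shows "symp n w (0(partner n i := c)) = w i * c"
proof -
  have "n + l \<noteq> i - n" "i - n < n" if "\<not> i < n" for l using assms that by simp_all
  then show ?thesis
    by (cases "i < n") (simp_all add: symp_def partner_def mult_if_zero cong: if_cong)
qed

lemma symp_unit_left:
  assumes "i < 2 * n"
  shows "symp n (0(partner n i := c)) w = c * w i"
proof -
  have "n + l \<noteq> i - n" "i - n < n" if "\<not> i < n" for l using assms that by simp_all
  then show ?thesis
    by (cases "i < n") (simp_all add: symp_def partner_def mult_if_zero cong: if_cong)
qed

lemma Espace_less: "w \<in> Espace n \<Longrightarrow> w i \<noteq> 0 \<Longrightarrow> i < 2 * n"
  unfolding Espace_def using not_less by blast

lemma unit_in_Espace: "i < 2 * n \<Longrightarrow> 0(i := c) \<in> Espace n"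
  by (simp add: Espace_def)

text \<open>Viewing E as F2 \<kappa> + F2 \<tau>, this is \<kappa> times the \<kappa>-coordinate.\<close>

definition kappa_coord :: "E \<Rightarrow> E" where
  "kappa_coord x = (if x = Kappa \<or> x = Zeta then Kappa else 0)"

lemma additive_kappa_coord: "additive kappa_coord"
proof
  fix x y :: E
  show "kappa_coord (x + y) = kappa_coord x + kappa_coord y"
    by (cases x; cases y) (simp_all add: kappa_coord_def zero_E_def)
qed

lemma kappa_coord_mult: "kappa_coord (x * y) = kappa_coord x * y"
  by (simp add: kappa_coord_def E_times)

lemma kappa_coord_range: "kappa_coord x \<in> {0, Kappa}"
  by (simp add: kappa_coord_def)

lemma kappa_coord_eq_0_iff: "kappa_coord x = 0 \<longleftrightarrow> x = 0 \<or> x = Tau"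
  by (cases x) (simp_all add: kappa_coord_def zero_E_def)

lemma kappa_coord_id: "x \<in> {0, Kappa} \<Longrightarrow> kappa_coord x = x"
  by (auto simp: kappa_coord_def)

text \<open>The \<kappa>-coordinate of x + \<kappa>x is the \<tau>-coordinate of x.\<close>

lemma eq_0_iff_kappa_coord: "x = 0 \<longleftrightarrow> kappa_coord x = 0 \<and> kappa_coord (x + Kappa * x) = 0"
  by (cases x) (simp_all add: kappa_coord_def E_times zero_E_def)

lemma kappa_coord_symp: "kappa_coord (symp n w z) = symp n (kappa_coord \<circ> w) z"
  by (simp add: symp_def additive.add[OF additive_kappa_coord] additive.sum[OF additive_kappa_coord]
      kappa_coord_mult)

lemma additive_comp_kappa_coord: "additive ((\<circ>) kappa_coord)"
  by standard (simp add: fun_eq_iff additive.add[OF additive_kappa_coord])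

definition kappa_vectors :: "nat \<Rightarrow> (nat \<Rightarrow> E) set" where
  "kappa_vectors n = {k \<in> Espace n. \<forall>i. k i \<in> {0, Kappa}}"

lemma additive_subgroup_kappa_vectors: "additive_subgroup (kappa_vectors n)"
proof -
  have "x - y \<in> {0, Kappa}" if "x \<in> {0, Kappa}" "y \<in> {0, Kappa}" for x y :: E
    using that by (auto simp: E_diff_eq_add)
  then show ?thesis
    by (auto simp: additive_subgroup_def kappa_vectors_def Espace_def)
qed

lemma vscale_Kappa_image_Espace: "vscale Kappa ` Espace n = kappa_vectors n"
proof
  show "vscale Kappa ` Espace n \<subseteq> kappa_vectors n"
    by (auto simp: kappa_vectors_def Espace_def vscale_def E_times)
  have "Kappa * x = x" if "x \<in> {0, Kappa}" for x :: E
    using that by (auto simp: E_times)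
  then have "k = vscale Kappa k" "k \<in> Espace n" if "k \<in> kappa_vectors n" for k
    using that by (simp_all add: kappa_vectors_def vscale_def fun_eq_iff)
  then show "kappa_vectors n \<subseteq> vscale Kappa ` Espace n"
    by blast
qed

lemma symp_kappa_vector_range:
  assumes "a \<in> kappa_vectors n"
  shows "symp n a k \<in> {0, Kappa}"
proof -
  have "kappa_coord \<circ> a = a"
    using assms by (auto simp: kappa_vectors_def kappa_coord_id)
  then show ?thesis
    using kappa_coord_symp[of n a k] kappa_coord_range by metis
qed

lemma kappa_vectors_nondegenerate:
  assumes "a \<in> kappa_vectors n" "a \<noteq> 0"
  shows "\<exists>k\<in>kappa_vectors n. symp n a k \<noteq> 0"
proof -
  obtain i where "a i \<noteq> 0" using assms(2) by (auto simp: fun_eq_iff)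
  then have "a i = Kappa" "i < 2 * n"
    using assms(1) Espace_less by (auto simp: kappa_vectors_def)
  then have "0(partner n i := Kappa) \<in> kappa_vectors n" "symp n a (0(partner n i := Kappa)) = Kappa"
    by (simp_all add: kappa_vectors_def unit_in_Espace partner_less symp_unit_right E_times)
  then show ?thesis by force
qed

lemma card_mult_card_kappa_perp:
  assumes "A \<subseteq> kappa_vectors n" "additive_subgroup A"
  shows "card A * card {k\<in>kappa_vectors n. \<forall>a\<in>A. symp n a k = 0} = card (kappa_vectors n)"
proof (rule card_mult_card_annihilator[where c = Kappa])
  show "finite (kappa_vectors n)"
    using finite_Espace by (simp add: kappa_vectors_def)
  then show "finite A"
    using assms(1) finite_subset by blast
  show "\<And>a k. a \<in> A \<Longrightarrow> k \<in> kappa_vectors n \<Longrightarrow> symp n a k \<in> {0, Kappa}"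
    using assms(1) symp_kappa_vector_range by blast
  show "\<And>a. a \<in> A \<Longrightarrow> a \<noteq> 0 \<Longrightarrow> \<exists>k\<in>kappa_vectors n. symp n a k \<noteq> 0"
    using assms(1) kappa_vectors_nondegenerate by blast
qed (simp_all add: assms(2) additive_subgroup_kappa_vectors additive_symp_left additive_symp_right)

lemma E_linear_code_orthogonal_iff:
  assumes C: "E_linear_code n C"
  shows "(\<forall>w\<in>C. symp n w z = 0) \<longleftrightarrow> (\<forall>w\<in>C. symp n (kappa_coord \<circ> w) z = 0)"
proof
  assume "\<forall>w\<in>C. symp n w z = 0"
  then show "\<forall>w\<in>C. symp n (kappa_coord \<circ> w) z = 0"
    by (metis kappa_coord_symp additive.zero[OF additive_kappa_coord])
next
  assume coord: "\<forall>w\<in>C. symp n (kappa_coord \<circ> w) z = 0"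
  show "\<forall>w\<in>C. symp n w z = 0"
  proof
    fix w assume "w \<in> C"
    then have "w + vscale Kappa w \<in> C"
      using E_linear_codeD[OF C] additive_subgroup_add by blast
    moreover have "symp n (w + vscale Kappa w) z = symp n w z + Kappa * symp n w z"
      by (simp add: additive.add[OF additive_symp_left] symp_vscale_left)
    ultimately show "symp n w z = 0"
      using coord \<open>w \<in> C\<close> eq_0_iff_kappa_coord kappa_coord_symp by metis
  qed
qed

lemma symp_perp_R_eq_preimage:
  assumes "E_linear_code n C"
  shows "symp_perp_R n C =
    {z\<in>Espace n. vscale Kappa z \<in> {k\<in>kappa_vectors n. \<forall>a\<in>(\<circ>) kappa_coord ` C. symp n a k = 0}}"
proof -
  have "vscale Kappa z \<in> kappa_vectors n" if "z \<in> Espace n" for z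
    using that vscale_Kappa_image_Espace by blast
  then show ?thesis
    by (auto simp: symp_perp_R_def E_linear_code_orthogonal_iff[OF assms] symp_vscale_Kappa_right)
qed

lemma card_E_linear_code:
  assumes C: "E_linear_code n C"
  shows "card C = card ((\<circ>) kappa_coord ` C) * card (vscale Kappa ` C)"
proof -
  have "card C = card ((\<circ>) kappa_coord ` C) * card {w\<in>C. kappa_coord \<circ> w = 0}"
    using card_preimage_additive[OF additive_comp_kappa_coord E_linear_codeD(2,3)[OF C], of UNIV]
    by simp
  moreover have "bij_betw (vscale Kappa) {w\<in>C. kappa_coord \<circ> w = 0} (vscale Kappa ` C)"
    \<comment> \<open>the kernel consists of the words over {0, \<tau>}, where \<tau>(\<kappa>x) = x\<close>
  proof (rule bij_betw_byWitness[where f' = "vscale Tau"])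
    have "Tau * (Kappa * x) = x" if "kappa_coord x = 0" for x
      using that by (auto simp: kappa_coord_eq_0_iff E_times)
    then show "\<forall>w\<in>{w\<in>C. kappa_coord \<circ> w = 0}. vscale Tau (vscale Kappa w) = w"
      by (simp add: fun_eq_iff vscale_def)
    show "\<forall>v\<in>vscale Kappa ` C. vscale Kappa (vscale Tau v) = v"
      by (auto simp: vscale_vscale E_times)
    show "vscale Tau ` vscale Kappa ` C \<subseteq> {w\<in>C. kappa_coord \<circ> w = 0}"
    proof
      fix v assume "v \<in> vscale Tau ` vscale Kappa ` C"
      then obtain w where "w \<in> C" "v = vscale Tau w"
        by (auto simp: vscale_vscale E_times)
      moreover have "kappa_coord \<circ> vscale Tau w = 0"
        by (simp add: fun_eq_iff vscale_def kappa_coord_def E_times)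
      ultimately show "v \<in> {w\<in>C. kappa_coord \<circ> w = 0}"
        using E_linear_codeD(4)[OF C] by blast
    qed
  qed auto
  ultimately show ?thesis
    by (simp add: bij_betw_same_card)
qed

lemma card_mult_card_symp_perp_R:
  assumes C: "E_linear_code n C"
  shows "card C * card (symp_perp_R n C) = card (vscale Kappa ` C) * card (Espace n)"
proof -
  define A where "A = (\<circ>) kappa_coord ` C"
  define P where "P = {k\<in>kappa_vectors n. \<forall>a\<in>A. symp n a k = 0}"
  define Z where "Z = {z\<in>Espace n. vscale Kappa z = 0}"
  note card_preimage = card_preimage_additive[OF additive_vscale[of Kappa] finite_Espace[of n] additive_subgroup_Espace[of n]]
  have "card (Espace n) = card (kappa_vectors n) * card Z"
    using card_preimage[where T = UNIV] by (simp add: vscale_Kappa_image_Espace Z_def)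
  moreover have "card (symp_perp_R n C) = card P * card Z"
  proof -
    have "P \<inter> vscale Kappa ` Espace n = P"
      by (auto simp: P_def vscale_Kappa_image_Espace)
    then show ?thesis
      using card_preimage[where T = P] by (simp add: symp_perp_R_eq_preimage[OF C] A_def P_def Z_def)
  qed
  moreover have "card A * card P = card (kappa_vectors n)"
    unfolding P_def
  proof (rule card_mult_card_kappa_perp)
    show "A \<subseteq> kappa_vectors n"
    proof
      fix a assume "a \<in> A"
      then obtain w where "w \<in> Espace n" "a = kappa_coord \<circ> w"
        using E_linear_codeD(1)[OF C] by (auto simp: A_def)
      then show "a \<in> kappa_vectors n"
        by (simp add: kappa_vectors_def Espace_def kappa_coord_def)
    qed
    show "additive_subgroup A"
      unfolding A_def using additive_subgroup_image[OF additive_comp_kappa_coord E_linear_codeD(3)[OF C]] .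
  qed
  ultimately show ?thesis
    using card_E_linear_code[OF C] by (simp add: A_def)
qed

lemma symp_perp_R_eq_symp_perp_iff:
  assumes C: "E_linear_code n C"
  shows "symp_perp_R n C = symp_perp n C \<longleftrightarrow> vscale Kappa ` C \<subseteq> {0}"
proof
  assume "vscale Kappa ` C \<subseteq> {0}"
  then have "symp n z w = 0" if "w \<in> C" for z w
    using that symp_vscale_Kappa_right[of n z w] by auto
  then have "symp_perp_R n C \<subseteq> symp_perp_L n C"
    by (auto simp: symp_perp_R_def symp_perp_L_def)
  then show "symp_perp_R n C = symp_perp n C"
    by (auto simp: symp_perp_def)
next
  assume eq: "symp_perp_R n C = symp_perp n C"
  show "vscale Kappa ` C \<subseteq> {0}"
  proof (rule ccontr)
    assume "\<not> vscale Kappa ` C \<subseteq> {0}"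
    then obtain w where "w \<in> C" "vscale Kappa w \<noteq> 0"
      by auto
    then obtain i where "Kappa * w i \<noteq> 0"
      by (auto simp: vscale_def fun_eq_iff)
    then have "w i = Kappa \<or> w i = Tau"
      by (simp add: E_mult_eq_0_iff)
    then have "w i \<noteq> 0" "Zeta * w i \<noteq> 0"
      by (auto simp: E_times)
    then have "i < 2 * n"
      using E_linear_codeD(1)[OF C] \<open>w \<in> C\<close> Espace_less by blast
    define z where "z = 0(partner n i := Zeta)"
    have "vscale Kappa z = 0"
      by (simp add: z_def vscale_def fun_eq_iff E_mult_eq_0_iff)
    then have "symp n v z = 0" for v
      using symp_vscale_Kappa_right[of n v z] by simp
    moreover have "z \<in> Espace n"
      using unit_in_Espace[OF partner_less[OF \<open>i < 2 * n\<close>]] by (simp add: z_def)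
    ultimately have "z \<in> symp_perp_R n C"
      by (simp add: symp_perp_R_def)
    moreover have "symp n z w \<noteq> 0"
      using symp_unit_left[OF \<open>i < 2 * n\<close>] \<open>Zeta * w i \<noteq> 0\<close> by (simp add: z_def)
    then have "z \<notin> symp_perp_L n C"
      using \<open>w \<in> C\<close> by (auto simp: symp_perp_L_def)
    ultimately show False
      using eq unfolding symp_perp_def by blast
  qed
qed

theorem mainTheorem11:
  fixes n :: nat and C :: "(nat \<Rightarrow> E) set"
  assumes "E_linear_code n C"
  shows "symp_perp_R n C = symp_perp n C \<longleftrightarrow> right_symplectic_nice n C"
proof -
  let ?K = "vscale Kappa ` C"
  have "0 \<in> ?K"
    using additive_subgroup_zero[OF E_linear_codeD(3)[OF assms]] additive.zero[OF additive_vscale]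
    by force
  have "card (Espace n) \<noteq> 0"
    by (simp add: card_Espace UNIV_E)
  have "right_symplectic_nice n C \<longleftrightarrow> card ?K * card (Espace n) = card (Espace n)"
    unfolding right_symplectic_nice_def card_mult_card_symp_perp_R[OF assms] card_Espace ..
  also have "\<dots> \<longleftrightarrow> card ?K = 1"
    using \<open>card (Espace n) \<noteq> 0\<close> by simp
  also have "\<dots> \<longleftrightarrow> ?K \<subseteq> {0}"
  proof
    assume "card ?K = 1"
    then obtain x where "?K = {x}" by (rule card_1_singletonE)
    then show "?K \<subseteq> {0}" using \<open>0 \<in> ?K\<close> by simp
  next
    assume "?K \<subseteq> {0}"
    then have "?K = {0}" using \<open>0 \<in> ?K\<close> by blast
    then show "card ?K = 1" by simp
  qed
  also have "\<dots> \<longleftrightarrow> symp_perp_R n C = symp_perp n C"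
    using symp_perp_R_eq_symp_perp_iff[OF assms] by simp
  finally show ?thesis by blast
qed

end
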